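(* Let $c$ be the complex Banach space of convergent sequences with the supremum norm, and let $L\in c^*$ be $L((c_n)_n)=\lim_{n\to\infty}c_n$ (so $\|L\|=1$). Let $\epsilon>0$. If $S:c\to c$ is a finite rank bounded linear operator with $\|(S^*-I_{c^*})L\|<\epsilon$, then $\|S-I_c\|\ge 2-\epsilon$. *)

theory Defs
  imports "HOL-Analysis.Analysis"
begin

definition conv_seqs :: "(nat \<Rightarrow> complex) set" where
  "conv_seqs = {x. convergent x}"

definition supnorm :: "(nat \<Rightarrow> complex) \<Rightarrow> real" where
  "supnorm x = (SUP n. cmod (x n))"

definition limfun :: "(nat \<Rightarrow> complex) \<Rightarrow> complex" where
  "limfun x = lim x"

definition bounded_linear_on_c :: "((nat \<Rightarrow> complex) \<Rightarrow> (nat \<Rightarrow> complex)) \<Rightarrow> bool" where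
  "bounded_linear_on_c S \<longleftrightarrow>
     (\<forall>x\<in>conv_seqs. S x \<in> conv_seqs) \<and>
     (\<forall>x\<in>conv_seqs. \<forall>y\<in>conv_seqs. S (\<lambda>n. x n + y n) = (\<lambda>n. S x n + S y n)) \<and>
     (\<forall>a::complex. \<forall>x\<in>conv_seqs. S (\<lambda>n. a * x n) = (\<lambda>n. a * S x n)) \<and>
     (\<exists>K. \<forall>x\<in>conv_seqs. supnorm (S x) \<le> K * supnorm x)"

definition finite_rank_on_c :: "((nat \<Rightarrow> complex) \<Rightarrow> (nat \<Rightarrow> complex)) \<Rightarrow> bool" where
  "finite_rank_on_c S \<longleftrightarrow>
     (\<exists>(m::nat) (v :: nat \<Rightarrow> nat \<Rightarrow> complex). (\<forall>i<m. v i \<in> conv_seqs) \<and>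
        (\<forall>x\<in>conv_seqs. \<exists>a :: nat \<Rightarrow> complex. S x = (\<lambda>k. \<Sum>i<m. a i * v i k)))"

definition opnorm_minus_id :: "((nat \<Rightarrow> complex) \<Rightarrow> (nat \<Rightarrow> complex)) \<Rightarrow> real" where
  "opnorm_minus_id S =
     Sup {supnorm (\<lambda>n. S x n - x n) | x. x \<in> conv_seqs \<and> supnorm x \<le> 1}"

text \<open>Norm in c* of (S^* - I) L, i.e. of the functional x |-> L(Sx) - L(x).\<close>
definition adj_minus_id_L_norm :: "((nat \<Rightarrow> complex) \<Rightarrow> (nat \<Rightarrow> complex)) \<Rightarrow> real" where
  "adj_minus_id_L_norm S =
     Sup {cmod (limfun (S x) - limfun x) | x. x \<in> conv_seqs \<and> supnorm x \<le> 1}"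

end

theory Submission
  imports Defs
begin

(* Let B be the closed unit ball of c and W = S(B).  Since S has finite rank,
   W is a bounded subset of the span of finitely many convergent sequences v_0,...,v_{m-1};
   such a set converges uniformly: for every delta > 0 there is an N with
   |w_n - lim w| <= delta for all n >= N and all w in W.  This is proved by induction on m,
   eliminating the last generator v_{m-1} using a point n0 where it does not vanish (the
   coefficient of v_{m-1} is then controlled by the value w(n0), hence bounded).
   Now test S on the sign-flip sequence x = (1,...,1,-1,-1,...) which jumps at N:
   x_N - lim x = 2, so by the triangle inequality
     2 <= |x_N - (Sx)_N| + |(Sx)_N - lim Sx| + |lim Sx - lim x|
       <= ||S - I|| + delta + ||(S^* - I)L||,
   and choosing delta = epsilon - ||(S^* - I)L|| gives ||S - I|| >= 2 - epsilon. *)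

section \<open>Uniform convergence of bounded subsets of a finite span\<close>

definition uniform_tails :: "(nat \<Rightarrow> 'a::real_normed_vector) set \<Rightarrow> bool" where
  "uniform_tails W \<longleftrightarrow> (\<forall>\<delta>>0. \<exists>N. \<forall>n\<ge>N. \<forall>w\<in>W. norm (w n - lim w) \<le> \<delta>)"

lemma convergent_lincomb:
  fixes v :: "nat \<Rightarrow> nat \<Rightarrow> 'a::real_normed_field"
  assumes "\<forall>i<m. convergent (v i)"
  shows "convergent (\<lambda>k. \<Sum>i<m. a i * v i k)"
proof (rule convergentI)
  have "(\<lambda>k. a i * v i k) \<longlonglongrightarrow> a i * lim (v i)" if "i \<in> {..<m}" for i
    using assms that by (intro tendsto_mult_left) (simp add: convergent_LIMSEQ_iff)
  thus "(\<lambda>k. \<Sum>i<m. a i * v i k) \<longlonglongrightarrow> (\<Sum>i<m. a i * lim (v i))"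
    by (rule tendsto_sum)
qed

lemma lincomb_eliminate_last:
  fixes v :: "nat \<Rightarrow> nat \<Rightarrow> 'a::field"
  assumes "v m j \<noteq> 0" and w: "w = (\<lambda>k. \<Sum>i<Suc m. a i * v i k)"
  shows "(\<lambda>k. w k - w j / v m j * v m k) = (\<lambda>k. \<Sum>i<m. a i * (v i k - v i j / v m j * v m k))"
proof
  fix k
  have "w k - w j / v m j * v m k
      = (\<Sum>i<m. a i * v i k) - (\<Sum>i<m. a i * v i j) / v m j * v m k"
    using assms by (simp add: field_simps)
  also have "\<dots> = (\<Sum>i<m. a i * v i k - a i * v i j / v m j * v m k)"
    by (simp add: sum_subtractf sum_divide_distrib sum_distrib_right)
  finally show "w k - w j / v m j * v m k = (\<Sum>i<m. a i * (v i k - v i j / v m j * v m k))"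
    by (simp add: algebra_simps)
qed

lemma uniform_tails_add_multiple:
  fixes u :: "nat \<Rightarrow> 'a::real_normed_field"
  assumes tails: "uniform_tails W'" and conv: "\<forall>w'\<in>W'. convergent w'" and u: "convergent u"
    and decomp: "\<forall>w\<in>W. \<exists>w'\<in>W'. \<exists>c. norm c \<le> C \<and> w = (\<lambda>k. w' k + c * u k)"
  shows "uniform_tails W"
  unfolding uniform_tails_def
proof (intro allI impI)
  fix \<delta> :: real assume "\<delta> > 0"
  define C' where "C' = \<bar>C\<bar> + 1"
  have "C' > 0" unfolding C'_def by simp
  have "\<delta> / 2 > 0" using \<open>\<delta> > 0\<close> by simp
  then obtain N1 where N1: "\<forall>n\<ge>N1. \<forall>w'\<in>W'. norm (w' n - lim w') \<le> \<delta>/2"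
    using tails unfolding uniform_tails_def by blast
  have u_lim: "u \<longlonglongrightarrow> lim u" using u by (simp add: convergent_LIMSEQ_iff)
  moreover have "\<delta> / (2*C') > 0" using \<open>C' > 0\<close> \<open>\<delta> > 0\<close> by simp
  ultimately obtain N2 where N2: "\<forall>n\<ge>N2. norm (u n - lim u) < \<delta> / (2*C')"
    unfolding LIMSEQ_def dist_norm by blast
  show "\<exists>N. \<forall>n\<ge>N. \<forall>w\<in>W. norm (w n - lim w) \<le> \<delta>"
  proof (intro exI[of _ "max N1 N2"] allI impI ballI)
    fix n w assume n: "max N1 N2 \<le> n" and "w \<in> W"
    then obtain w' c where w': "w' \<in> W'" "norm c \<le> C" and w: "w = (\<lambda>k. w' k + c * u k)"
      using decomp by blast
    have "w' \<longlonglongrightarrow> lim w'" using conv w'(1) by (simp add: convergent_LIMSEQ_iff)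
    hence "w \<longlonglongrightarrow> lim w' + c * lim u"
      unfolding w using u_lim by (intro tendsto_add tendsto_mult_left)
    hence "lim w = lim w' + c * lim u" by (rule limI)
    hence "w n - lim w = (w' n - lim w') + c * (u n - lim u)"
      by (simp add: w algebra_simps)
    hence "norm (w n - lim w) \<le> norm (w' n - lim w') + norm c * norm (u n - lim u)"
      by (metis norm_mult norm_triangle_ineq)
    also have "\<dots> \<le> \<delta>/2 + C' * (\<delta> / (2*C'))"
    proof (rule add_mono)
      show "norm (w' n - lim w') \<le> \<delta>/2" using N1 n w'(1) by simp
      show "norm c * norm (u n - lim u) \<le> C' * (\<delta> / (2*C'))"
        using N2 n w'(2) unfolding C'_def by (intro mult_mono) auto
    qed
    also have "\<dots> = \<delta>" using \<open>C' > 0\<close> by simp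
    finally show "norm (w n - lim w) \<le> \<delta>" .
  qed
qed

text \<open>Induction step for the next lemma: if v m does not vanish at n0, subtracting
  (w n0 / v m n0) v m from every w in W gives a bounded family in the span of m convergent
  sequences, and the subtracted coefficients are bounded.\<close>
lemma bounded_span_uniform_tails_step:
  fixes v :: "nat \<Rightarrow> nat \<Rightarrow> 'a::real_normed_field"
  assumes IH: "\<And>(v :: nat \<Rightarrow> nat \<Rightarrow> 'a) W B. \<forall>i<m. convergent (v i)
      \<Longrightarrow> \<forall>w\<in>W. \<exists>a. w = (\<lambda>k. \<Sum>i<m. a i * v i k)
      \<Longrightarrow> \<forall>w\<in>W. \<forall>n. norm (w n) \<le> B \<Longrightarrow> uniform_tails W"
    and conv: "\<forall>i<Suc m. convergent (v i)"
    and span: "\<forall>w\<in>W. \<exists>a. w = (\<lambda>k. \<Sum>i<Suc m. a i * v i k)"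
    and bdd: "\<forall>w\<in>W. \<forall>n. norm (w n) \<le> B"
    and n0: "v m n0 \<noteq> 0"
  shows "uniform_tails W"
proof -
  define c where "c = v m n0"
  define v' where "v' i = (\<lambda>k. v i k - v i n0 / c * v m k)" for i
  define W' where "W' = (\<lambda>w k. w k - w n0 / c * v m k) ` W"
  have vm: "convergent (v m)" using conv by simp
  then obtain Bv where Bv: "\<forall>k. norm (v m k) \<le> Bv"
    using convergent_imp_Bseq BseqE by metis
  have coef: "norm (w n0 / c) \<le> \<bar>B\<bar> / norm c" if "w \<in> W" for w
  proof -
    have "norm (w n0) \<le> \<bar>B\<bar>" using bdd that by (meson abs_ge_self order_trans)
    thus ?thesis by (simp add: norm_divide divide_right_mono)
  qed
  have v'_conv: "\<forall>i<m. convergent (v' i)"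
  proof (intro allI impI)
    fix i assume "i < m"
    hence "v' i \<longlonglongrightarrow> lim (v i) - v i n0 / c * lim (v m)"
      unfolding v'_def using conv
      by (intro tendsto_diff tendsto_mult_left) (simp_all add: convergent_LIMSEQ_iff)
    thus "convergent (v' i)" by (rule convergentI)
  qed
  have W'_span: "\<forall>w'\<in>W'. \<exists>a. w' = (\<lambda>k. \<Sum>i<m. a i * v' i k)"
  proof
    fix w' assume "w' \<in> W'"
    then obtain w a where w'_eq: "w' = (\<lambda>k. w k - w n0 / c * v m k)"
      and w_eq: "w = (\<lambda>k. \<Sum>i<Suc m. a i * v i k)"
      using span unfolding W'_def by blast
    have "w' = (\<lambda>k. \<Sum>i<m. a i * v' i k)"
      unfolding w'_eq v'_def c_def
      by (rule lincomb_eliminate_last[where v = v and m = m and j = n0, OF n0 w_eq])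
    thus "\<exists>a. w' = (\<lambda>k. \<Sum>i<m. a i * v' i k)" by blast
  qed
  have W'_bdd: "\<forall>w'\<in>W'. \<forall>n. norm (w' n) \<le> \<bar>B\<bar> + \<bar>B\<bar> / norm c * \<bar>Bv\<bar>"
  proof (intro ballI allI)
    fix w' n assume "w' \<in> W'"
    then obtain w where w: "w \<in> W" and w': "w' = (\<lambda>k. w k - w n0 / c * v m k)"
      unfolding W'_def by auto
    have "norm (w' n) \<le> norm (w n) + norm (w n0 / c) * norm (v m n)"
      unfolding w' by (metis norm_mult norm_triangle_ineq4)
    also have "\<dots> \<le> \<bar>B\<bar> + \<bar>B\<bar> / norm c * \<bar>Bv\<bar>"
      using bdd w coef[OF w] Bv
      by (intro add_mono mult_mono) (auto intro: order.trans[OF _ abs_ge_self])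
    finally show "norm (w' n) \<le> \<bar>B\<bar> + \<bar>B\<bar> / norm c * \<bar>Bv\<bar>" .
  qed
  have "uniform_tails W'" by (rule IH[OF v'_conv W'_span W'_bdd])
  moreover have "\<forall>w'\<in>W'. convergent w'"
    using W'_span convergent_lincomb[OF v'_conv] by metis
  moreover have "\<forall>w\<in>W. \<exists>w'\<in>W'. \<exists>a. norm a \<le> \<bar>B\<bar> / norm c \<and> w = (\<lambda>k. w' k + a * v m k)"
  proof
    fix w assume "w \<in> W"
    then show "\<exists>w'\<in>W'. \<exists>a. norm a \<le> \<bar>B\<bar> / norm c \<and> w = (\<lambda>k. w' k + a * v m k)"
      using coef unfolding W'_def
      by (intro bexI[of _ "\<lambda>k. w k - w n0 / c * v m k"] exI[of _ "w n0 / c"]) auto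
  qed
  ultimately show ?thesis by (rule uniform_tails_add_multiple[OF _ _ vm])
qed

lemma bounded_span_uniform_tails:
  fixes v :: "nat \<Rightarrow> nat \<Rightarrow> 'a::real_normed_field"
  assumes "\<forall>i<m. convergent (v i)"
    and "\<forall>w\<in>W. \<exists>a. w = (\<lambda>k. \<Sum>i<m. a i * v i k)"
    and "\<forall>w\<in>W. \<forall>n. norm (w n) \<le> B"
  shows "uniform_tails W"
  using assms
proof (induction m arbitrary: v W B)
  case 0
  have zero_tail: "norm (w n - lim w) = 0" if "w \<in> W" for w n
  proof -
    have "w = (\<lambda>k. 0)" using 0 that by simp
    moreover from this have "lim w = 0" by (simp add: limI)
    ultimately show ?thesis by simp
  qed
  then have "\<forall>n\<ge>0. \<forall>w\<in>W. norm (w n - lim w) \<le> \<delta>" if "\<delta> > 0" for \<delta>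
    using that zero_tail by (metis less_imp_le)
  then show ?case unfolding uniform_tails_def by blast
next
  case (Suc m)
  show ?case
  proof (cases "\<forall>k. v m k = 0")
    case True
    then have "\<forall>w\<in>W. \<exists>a. w = (\<lambda>k. \<Sum>i<m. a i * v i k)" using Suc.prems(2) by simp
    then show ?thesis using Suc.IH[of v W B] Suc.prems(1,3) by simp
  next
    case False
    then obtain n0 where "v m n0 \<noteq> 0" by auto
    with Suc show ?thesis by (intro bounded_span_uniform_tails_step[of m v W B n0]) auto
  qed
qed

lemma convergent_bdd_above_norm: "convergent x \<Longrightarrow> bdd_above (range (\<lambda>n. cmod (x n)))"
  by (metis Bseq_def bdd_aboveI2 convergent_imp_Bseq)

lemma norm_le_supnorm: "convergent x \<Longrightarrow> cmod (x n) \<le> supnorm x"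
  unfolding supnorm_def by (rule cSUP_upper[OF _ convergent_bdd_above_norm]) auto

lemma supnorm_le: "(\<And>n. cmod (x n) \<le> B) \<Longrightarrow> supnorm x \<le> B"
  unfolding supnorm_def by (rule cSUP_least) auto

lemma norm_lim_le_supnorm:
  assumes "convergent x" shows "cmod (lim x) \<le> supnorm x"
proof -
  have "(\<lambda>n. cmod (x n)) \<longlonglongrightarrow> cmod (lim x)"
    using assms by (intro tendsto_norm) (simp add: convergent_LIMSEQ_iff)
  thus ?thesis using norm_le_supnorm[OF assms] by (intro LIMSEQ_le_const2) auto
qed

lemma bounded_linear_on_c_convergent:
  "bounded_linear_on_c S \<Longrightarrow> convergent x \<Longrightarrow> convergent (S x)"
  unfolding bounded_linear_on_c_def conv_seqs_def by auto

lemma bounded_linear_on_c_unit_ball: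
  assumes S: "bounded_linear_on_c S"
  obtains B where "\<And>x n. convergent x \<Longrightarrow> supnorm x \<le> 1 \<Longrightarrow> cmod (S x n) \<le> B"
proof -
  obtain K where K: "\<And>x. convergent x \<Longrightarrow> supnorm (S x) \<le> K * supnorm x"
    using S unfolding bounded_linear_on_c_def conv_seqs_def by auto
  have "cmod (S x n) \<le> \<bar>K\<bar>" if x: "convergent x" "supnorm x \<le> 1" for x n
  proof -
    have "0 \<le> supnorm x" by (rule order_trans[OF norm_ge_zero norm_le_supnorm[OF x(1)]])
    have "cmod (S x n) \<le> supnorm (S x)"
      by (rule norm_le_supnorm[OF bounded_linear_on_c_convergent[OF S x(1)]])
    also have "\<dots> \<le> K * supnorm x" by (rule K[OF x(1)])
    also have "\<dots> \<le> \<bar>K\<bar> * supnorm x" using \<open>0 \<le> supnorm x\<close> by (simp add: mult_right_mono)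
    also have "\<dots> \<le> \<bar>K\<bar>" using x(2) \<open>0 \<le> supnorm x\<close> by (simp add: mult_left_le)
    finally show ?thesis .
  qed
  thus thesis by (rule that)
qed

lemma finite_rank_unit_ball_uniform_tails:
  assumes "bounded_linear_on_c S" and "finite_rank_on_c S"
  shows "uniform_tails (S ` {x. convergent x \<and> supnorm x \<le> 1})"
proof -
  obtain m :: nat and v :: "nat \<Rightarrow> nat \<Rightarrow> complex" where "\<forall>i<m. convergent (v i)"
    and span: "\<forall>x. convergent x \<longrightarrow> (\<exists>a. S x = (\<lambda>k. \<Sum>i<m. a i * v i k))"
    using assms(2) unfolding finite_rank_on_c_def conv_seqs_def mem_Collect_eq by blast
  moreover obtain B where "\<And>x n. convergent x \<Longrightarrow> supnorm x \<le> 1 \<Longrightarrow> cmod (S x n) \<le> B"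
    using bounded_linear_on_c_unit_ball[OF assms(1)] by blast
  ultimately show ?thesis by (intro bounded_span_uniform_tails) auto
qed

lemma adj_minus_id_L_norm_ge:
  assumes "bounded_linear_on_c S" "convergent x" "supnorm x \<le> 1"
  shows "cmod (lim (S x) - lim x) \<le> adj_minus_id_L_norm S"
  unfolding adj_minus_id_L_norm_def
proof (rule cSup_upper)
  show "cmod (lim (S x) - lim x) \<in> {cmod (limfun (S x) - limfun x) | x. x \<in> conv_seqs \<and> supnorm x \<le> 1}"
    using assms unfolding limfun_def conv_seqs_def by auto
  obtain B where B: "\<And>x n. convergent x \<Longrightarrow> supnorm x \<le> 1 \<Longrightarrow> cmod (S x n) \<le> B"
    using bounded_linear_on_c_unit_ball[OF assms(1)] by blast
  note Sc = bounded_linear_on_c_convergent[OF assms(1)]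
  show "bdd_above {cmod (limfun (S x) - limfun x) | x. x \<in> conv_seqs \<and> supnorm x \<le> 1}"
  proof (rule bdd_aboveI)
    fix y assume "y \<in> {cmod (limfun (S x) - limfun x) | x. x \<in> conv_seqs \<and> supnorm x \<le> 1}"
    then obtain z where z: "convergent z" "supnorm z \<le> 1" "y = cmod (lim (S z) - lim z)"
      unfolding limfun_def conv_seqs_def by auto
    have "supnorm (S z) \<le> B" by (rule supnorm_le) (rule B[OF z(1,2)])
    have "y \<le> cmod (lim (S z)) + cmod (lim z)" using z(3) norm_triangle_ineq4 by blast
    also have "\<dots> \<le> B + 1"
      using norm_lim_le_supnorm[OF Sc[OF z(1)]] norm_lim_le_supnorm[OF z(1)]
        \<open>supnorm (S z) \<le> B\<close> z(2) by linarith
    finally show "y \<le> B + 1" .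
  qed
qed

lemma opnorm_minus_id_ge:
  assumes "bounded_linear_on_c S" "convergent x" "supnorm x \<le> 1"
  shows "cmod (S x n - x n) \<le> opnorm_minus_id S"
proof -
  obtain B where B: "\<And>x n. convergent x \<Longrightarrow> supnorm x \<le> 1 \<Longrightarrow> cmod (S x n) \<le> B"
    using bounded_linear_on_c_unit_ball[OF assms(1)] by blast
  note Sc = bounded_linear_on_c_convergent[OF assms(1)]
  have "cmod (S x n - x n) \<le> supnorm (\<lambda>n. S x n - x n)"
    using Sc[OF assms(2)] assms(2) by (intro norm_le_supnorm convergent_diff)
  also have "\<dots> \<le> opnorm_minus_id S"
    unfolding opnorm_minus_id_def
  proof (rule cSup_upper)
    show "supnorm (\<lambda>n. S x n - x n) \<in> {supnorm (\<lambda>n. S x n - x n) |x. x \<in> conv_seqs \<and> supnorm x \<le> 1}"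
      using assms unfolding conv_seqs_def by auto
    show "bdd_above {supnorm (\<lambda>n. S x n - x n) |x. x \<in> conv_seqs \<and> supnorm x \<le> 1}"
    proof (rule bdd_aboveI)
      fix y assume "y \<in> {supnorm (\<lambda>n. S x n - x n) |x. x \<in> conv_seqs \<and> supnorm x \<le> 1}"
      then obtain z where z: "convergent z" "supnorm z \<le> 1" "y = supnorm (\<lambda>n. S z n - z n)"
        unfolding conv_seqs_def by auto
      have "cmod (S z n - z n) \<le> B + 1" for n
        using norm_triangle_ineq4[of "S z n" "z n"] B[OF z(1,2), of n]
          norm_le_supnorm[OF z(1), of n] z(2) by linarith
      hence "supnorm (\<lambda>n. S z n - z n) \<le> B + 1" by (rule supnorm_le)
      thus "y \<le> B + 1" using z(3) by simp
    qed
  qed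
  finally show ?thesis .
qed

section \<open>The sign-flip test sequence\<close>

text \<open>The sequence that equals 1 up to index N and -1 afterwards; it lies in the unit
  ball, and its value at N is at distance 2 from its limit.\<close>
definition sign_flip :: "nat \<Rightarrow> nat \<Rightarrow> complex" where
  "sign_flip N k = (if k \<le> N then 1 else -1)"

lemma sign_flip_tendsto: "sign_flip N \<longlonglongrightarrow> -1"
proof (rule tendsto_eventually)
  have "\<forall>k\<ge>Suc N. sign_flip N k = -1" by (simp add: sign_flip_def)
  thus "\<forall>\<^sub>F k in sequentially. sign_flip N k = -1"
    unfolding eventually_sequentially by blast
qed

lemma sign_flip_supnorm: "supnorm (sign_flip N) \<le> 1"
  by (rule supnorm_le) (simp add: sign_flip_def)

lemma opnorm_minus_id_lower_bound:
  assumes S: "bounded_linear_on_c S"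
    and tail: "cmod (S (sign_flip N) N - lim (S (sign_flip N))) \<le> \<delta>"
  shows "2 - \<delta> - adj_minus_id_L_norm S \<le> opnorm_minus_id S"
proof -
  let ?x = "sign_flip N"
  have x: "convergent ?x" "lim ?x = -1"
    using sign_flip_tendsto by (auto intro: convergentI limI)
  have "2 = cmod (?x N - lim ?x)" using x(2) by (simp add: sign_flip_def)
  also have "\<dots> = cmod ((?x N - S ?x N) + (S ?x N - lim (S ?x)) + (lim (S ?x) - lim ?x))"
    by simp
  also have "\<dots> \<le> cmod (?x N - S ?x N) + cmod (S ?x N - lim (S ?x)) + cmod (lim (S ?x) - lim ?x)"
    by (rule order_trans[OF norm_triangle_ineq add_right_mono[OF norm_triangle_ineq]])
  also have "\<dots> \<le> opnorm_minus_id S + \<delta> + adj_minus_id_L_norm S"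
    using opnorm_minus_id_ge[OF S x(1) sign_flip_supnorm, of N] tail
      adj_minus_id_L_norm_ge[OF S x(1) sign_flip_supnorm]
    by (simp add: norm_minus_commute)
  finally show ?thesis by simp
qed

theorem mainTheorem7:
  fixes S :: "(nat \<Rightarrow> complex) \<Rightarrow> (nat \<Rightarrow> complex)" and \<epsilon> :: real
  assumes "\<epsilon> > 0"
    and "bounded_linear_on_c S"
    and "finite_rank_on_c S"
    and "adj_minus_id_L_norm S < \<epsilon>"
  shows "opnorm_minus_id S \<ge> 2 - \<epsilon>"
proof -
  define \<delta> where "\<delta> = \<epsilon> - adj_minus_id_L_norm S"
  have "\<delta> > 0" using assms(4) unfolding \<delta>_def by simp
  then obtain N where N: "\<forall>n\<ge>N. \<forall>w\<in>S ` {x. convergent x \<and> supnorm x \<le> 1}. cmod (w n - lim w) \<le> \<delta>"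
    using finite_rank_unit_ball_uniform_tails[OF assms(2,3)] unfolding uniform_tails_def by blast
  have "S (sign_flip N) \<in> S ` {x. convergent x \<and> supnorm x \<le> 1}"
    using sign_flip_tendsto sign_flip_supnorm by (auto intro: convergentI)
  hence "cmod (S (sign_flip N) N - lim (S (sign_flip N))) \<le> \<delta>" using N by blast
  hence "2 - \<delta> - adj_minus_id_L_norm S \<le> opnorm_minus_id S"
    by (rule opnorm_minus_id_lower_bound[OF assms(2)])
  thus ?thesis unfolding \<delta>_def by simp
qed

end
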